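(* Let $n\geq 3$. There exist $a>1$, $p,q\in\mathbb{R}$, $\hat\theta\in\mathbb{R}$, angles $\theta_{\min}\le\theta_0<\theta_{\max}$, and a curve $\gamma_\infty(\theta)=(r_\infty(\theta)\cos\theta,r_\infty(\theta)\sin\theta)$, $\theta\in[\theta_{\min},\theta_{\max}]$, lying on a level curve of $\mathrm{Im}(e^{-i\hat\theta}z^n)$ (hence a stationary solution, i.e. $\frac{2r_\infty'^2-r_\infty r_\infty''+r_\infty^2}{r_\infty'^2+r_\infty^2}+(n-1)=0$), such that $\gamma_\infty(\theta_0)=(1,q)$ with $\gamma_\infty'(\theta_0)$ vertical (so the class $[\alpha]=p[H]-q[E]$ is semi-stable with respect to $[\omega]=a[H]-[E]$ on the blowup of $\mathbb{P}^n$ at a point, destabilized by the exceptional divisor $E$), $\gamma_\infty(\theta_{\max})=(a,p)$, $1\le r_\infty\cos\theta\le a$ with $r_\infty(\theta_{\min})\cos\theta_{\min}=r_\infty(\theta_{\max})\cos\theta_{\max}=a$, and $$r_\infty'\geq 0,\qquad \frac{r_\infty'}{r_\infty}\le 2\tan\theta\qquad\text{on }[\theta_{\min},\theta_{\max}].$$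
   Context: Here $z=x+iy$ is the complex coordinate on $\mathbb{R}^2$. On the blowup $X$ of $\mathbb{P}^n$ at a point, $H$ denotes the pullback of a hyperplane and $E$ the exceptional divisor; $[\omega]=a[H]-[E]$ with $a>1$ is a K\"ahler class. Semi-stability refers to the condition $\pi>\arg Z(V)>\arg Z(X)$ with $Z(V)=-\int_V e^{-i\omega+\alpha}$ (only the degree-$\dim V$ term integrated) holding only non-strictly, with $E$ the subvariety where strictness fails; for Calabi-symmetric data this corresponds to the level curve of $\mathrm{Im}(e^{-i\hat\theta}z^n)$ through $(1,q)$ having vertical tangent there. *)

theory Defs
  imports "HOL-Analysis.Analysis"
begin

end

theory Submission
  imports Defs
begin

(* In polar coordinates the level curve Im (cis (-(phi - pi/2)) * z^n) = K^n is
   r^n cos (n t - phi) = K^n.  Along it r'/r = tan (n t - phi), which turns the stationary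
   equation into an identity, and the abscissa x = r cos t satisfies
   x' = x (tan (n t - phi) - tan t).  For phi = (n - 1) pi/4 one has
   n t - phi - t = (n - 1) (t - pi/4), so x has a strict minimum at t = pi/4, where the tangent
   is vertical; K normalises this minimum to 1.  Cutting the valley of x at a level a > 1 close
   to 1 gives th_min < pi/4 < th_max with x = a at both ends and 1 <= x <= a in between.
   Near pi/4 the phase n t - phi lies in [0, pi/3], so r' >= 0, and tan (n t - phi) <= 2 tan t:
   left of pi/4 because n t - phi <= t, right of it because tan (pi/3) = sqrt 3 <= 2 tan t. *)

definition level_radius :: "real \<Rightarrow> real \<Rightarrow> real \<Rightarrow> real \<Rightarrow> real" where
  "level_radius N \<phi> K t = K * cos (N * t - \<phi>) powr (- 1 / N)"

definition level_radius' :: "real \<Rightarrow> real \<Rightarrow> real \<Rightarrow> real \<Rightarrow> real" where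
  "level_radius' N \<phi> K t = level_radius N \<phi> K t * tan (N * t - \<phi>)"

definition level_radius'' :: "real \<Rightarrow> real \<Rightarrow> real \<Rightarrow> real \<Rightarrow> real" where
  "level_radius'' N \<phi> K t =
     level_radius N \<phi> K t * ((tan (N * t - \<phi>))\<^sup>2 + N / (cos (N * t - \<phi>))\<^sup>2)"

lemma level_radius_pos: "K > 0 \<Longrightarrow> cos (N * t - \<phi>) > 0 \<Longrightarrow> level_radius N \<phi> K t > 0"
  by (simp add: level_radius_def)

lemma has_real_derivative_level_radius:
  assumes "cos (N * t - \<phi>) > 0" "N \<noteq> 0"
  shows "(level_radius N \<phi> K has_real_derivative level_radius' N \<phi> K t) (at t)"
proof -
  have "cos (N * t - \<phi>) powr (- 1 / N - 1) = cos (N * t - \<phi>) powr (- 1 / N) / cos (N * t - \<phi>)"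
    using assms by (simp add: powr_diff)
  then show ?thesis
    unfolding level_radius_def[abs_def] level_radius'_def
    using assms
    by (auto intro!: derivative_eq_intros DERIV_powr simp: tan_def field_simps)
qed

lemma has_real_derivative_level_radius':
  assumes "cos (N * t - \<phi>) > 0" "N \<noteq> 0"
  shows "(level_radius' N \<phi> K has_real_derivative level_radius'' N \<phi> K t) (at t)"
proof -
  have "((\<lambda>t. tan (N * t - \<phi>)) has_real_derivative N / (cos (N * t - \<phi>))\<^sup>2) (at t)"
    using assms by (auto intro!: derivative_eq_intros DERIV_chain2[OF DERIV_tan] simp: field_simps)
  from DERIV_mult[OF has_real_derivative_level_radius[OF assms] this] show ?thesis
    unfolding level_radius'_def[abs_def] level_radius''_def
    by (simp add: field_simps power2_eq_square)
qed

lemma level_radius_stationary: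
  assumes "K \<noteq> 0" "cos (N * t - \<phi>) > 0"
  shows "(2 * (level_radius' N \<phi> K t)\<^sup>2 - level_radius N \<phi> K t * level_radius'' N \<phi> K t
            + (level_radius N \<phi> K t)\<^sup>2) / ((level_radius' N \<phi> K t)\<^sup>2 + (level_radius N \<phi> K t)\<^sup>2)
         = 1 - N"
proof -
  define c T R where "c = cos (N * t - \<phi>)" and "T = tan (N * t - \<phi>)" and "R = level_radius N \<phi> K t"
  have "R \<noteq> 0" "c \<noteq> 0" using assms by (auto simp: R_def c_def level_radius_def)
  have sec: "1 / c\<^sup>2 = T\<^sup>2 + 1"
    using \<open>c \<noteq> 0\<close> sin_cos_squared_add[of "N * t - \<phi>"]
    by (simp add: c_def T_def tan_def field_simps)
  have "T\<^sup>2 + 1 \<noteq> 0" using zero_le_power2[of T] by linarith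
  have "N / c\<^sup>2 = N * (T\<^sup>2 + 1)"
    by (simp flip: sec)
  then have "level_radius'' N \<phi> K t = R * ((T\<^sup>2 + 1) * (N + 1) - 1)"
    by (simp add: level_radius''_def algebra_simps flip: R_def c_def T_def)
  then have "2 * (R * T)\<^sup>2 - R * level_radius'' N \<phi> K t + R\<^sup>2 = (1 - N) * (R\<^sup>2 * (T\<^sup>2 + 1))"
    by (simp add: algebra_simps power2_eq_square)
  moreover have "(R * T)\<^sup>2 + R\<^sup>2 = R\<^sup>2 * (T\<^sup>2 + 1)"
    by (simp add: algebra_simps power_mult_distrib)
  moreover have "R\<^sup>2 * (T\<^sup>2 + 1) \<noteq> 0"
    using \<open>R \<noteq> 0\<close> \<open>T\<^sup>2 + 1 \<noteq> 0\<close> by simp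
  ultimately show ?thesis
    by (simp add: level_radius'_def flip: R_def T_def)
qed

lemma Im_level_radius_power:
  fixes n :: nat and \<phi> K t :: real
  assumes "n > 0" "cos (n * t - \<phi>) > 0"
  shows "Im (cis (- (\<phi> - pi / 2)) * (complex_of_real (level_radius n \<phi> K t) * cis t) ^ n) = K ^ n"
proof -
  let ?c = "cos (n * t - \<phi>)"
  have "cis (- (\<phi> - pi / 2)) * (complex_of_real (level_radius n \<phi> K t) * cis t) ^ n
      = complex_of_real (level_radius n \<phi> K t ^ n) * cis (n * t - \<phi> + pi / 2)"
    using Complex.DeMoivre[of t n] by (simp add: power_mult_distrib cis_mult mult.left_commute algebra_simps)
  then have "Im (cis (- (\<phi> - pi / 2)) * (complex_of_real (level_radius n \<phi> K t) * cis t) ^ n)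
      = level_radius n \<phi> K t ^ n * ?c"
    by (simp add: sin_add)
  also have "level_radius n \<phi> K t ^ n = K ^ n * ?c powr (- 1)"
    using assms by (simp add: level_radius_def power_mult_distrib powr_realpow[symmetric] powr_powr)
  finally show ?thesis
    using assms by (simp add: powr_minus)
qed

lemma level_radius'_cos_minus_sin:
  assumes "cos t \<noteq> 0"
  shows "level_radius' N \<phi> K t * cos t - level_radius N \<phi> K t * sin t
       = level_radius N \<phi> K t * cos t * (tan (N * t - \<phi>) - tan t)"
  using assms by (simp add: level_radius'_def tan_def field_simps)

lemma has_real_derivative_level_radius_cos:
  assumes "cos (N * t - \<phi>) > 0" "N \<noteq> 0" "cos t \<noteq> 0"
  shows "((\<lambda>t. level_radius N \<phi> K t * cos t) has_real_derivative
           level_radius N \<phi> K t * cos t * (tan (N * t - \<phi>) - tan t)) (at t)"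
proof -
  have "((\<lambda>t. level_radius N \<phi> K t * cos t) has_real_derivative
          level_radius' N \<phi> K t * cos t - level_radius N \<phi> K t * sin t) (at t)"
    by (auto intro!: derivative_eq_intros has_real_derivative_level_radius assms)
  then show ?thesis
    by (simp only: level_radius'_cos_minus_sin[OF assms(3)])
qed

lemma window_phase_bounds:
  fixes N t :: real
  assumes "N > 1" "t \<in> {pi/4 - 3*pi/(4*N) <..< pi/4 + pi/(4*N)}"
  shows "- (pi / 2) < N * t - (N - 1) * pi / 4" "N * t - (N - 1) * pi / 4 < pi / 2"
    and "- (pi / 2) < t" "t < pi / 2"
proof -
  have phase: "N * t - (N - 1) * pi / 4 = N * (t - pi / 4) + pi / 4"
    by (simp add: field_simps)
  have "- (3*pi/(4*N)) < t - pi / 4" "t - pi / 4 < pi/(4*N)"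
    using assms(2) by auto
  then have "N * (- (3*pi/(4*N))) < N * (t - pi / 4)" "N * (t - pi / 4) < N * (pi/(4*N))"
    using assms(1) by (simp_all only: mult_strict_left_mono)
  moreover have "N * (3*pi/(4*N)) = 3*pi/4" "N * (pi/(4*N)) = pi/4"
    using assms(1) by simp_all
  ultimately show "- (pi / 2) < N * t - (N - 1) * pi / 4" "N * t - (N - 1) * pi / 4 < pi / 2"
    unfolding phase by linarith+
  have "pi / (4 * N) < pi / 4"
    using assms(1) by (simp add: field_simps)
  then show "- (pi / 2) < t" "t < pi / 2"
    using assms(2) by auto
qed

lemma cos_pos_window:
  assumes "N > 1" "t \<in> {pi/4 - 3*pi/(4*N) <..< pi/4 + pi/(4*N)}"
  shows "cos (N * t - (N - 1) * pi / 4) > 0" "cos t > 0"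
  using window_phase_bounds[OF assms] by (simp_all add: cos_gt_zero_pi)

lemma has_real_derivative_level_radius_cos_window:
  assumes "N > 1" "t \<in> {pi/4 - 3*pi/(4*N) <..< pi/4 + pi/(4*N)}"
  shows "((\<lambda>t. level_radius N ((N - 1) * pi / 4) K t * cos t) has_real_derivative
           level_radius N ((N - 1) * pi / 4) K t * cos t * (tan (N * t - (N - 1) * pi / 4) - tan t)) (at t)"
  using cos_pos_window[OF assms] assms(1)
  by (intro has_real_derivative_level_radius_cos) simp_all

lemma continuous_on_level_radius_cos_window:
  assumes "N > 1"
  shows "continuous_on {pi/4 - 3*pi/(4*N) <..< pi/4 + pi/(4*N)} (\<lambda>t. level_radius N ((N - 1) * pi / 4) K t * cos t)"
  using has_real_derivative_level_radius_cos_window[OF assms]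
  by (blast intro: continuous_at_imp_continuous_on DERIV_isCont)

lemma level_radius_cos_deriv_sign:
  assumes "N > 1" "K > 0" "t \<in> {pi/4 - 3*pi/(4*N) <..< pi/4 + pi/(4*N)}"
  shows "t < pi / 4 \<Longrightarrow>
           level_radius N ((N - 1) * pi / 4) K t * cos t * (tan (N * t - (N - 1) * pi / 4) - tan t) < 0"
    and "pi / 4 < t \<Longrightarrow>
           level_radius N ((N - 1) * pi / 4) K t * cos t * (tan (N * t - (N - 1) * pi / 4) - tan t) > 0"
proof -
  note bounds = window_phase_bounds[OF assms(1,3)]
  have pos: "level_radius N ((N - 1) * pi / 4) K t * cos t > 0"
    using cos_pos_window[OF assms(1,3)] assms(2) by (simp add: level_radius_pos)
  have gap: "N * t - (N - 1) * pi / 4 - t = (N - 1) * (t - pi / 4)"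
    by (simp add: algebra_simps)
  show "level_radius N ((N - 1) * pi / 4) K t * cos t * (tan (N * t - (N - 1) * pi / 4) - tan t) < 0"
    if "t < pi / 4"
  proof -
    have "(N - 1) * (t - pi / 4) < 0" using assms(1) that by (simp add: mult_pos_neg)
    then have "tan (N * t - (N - 1) * pi / 4) < tan t"
      using bounds gap by (intro tan_monotone) auto
    then show ?thesis using pos by (simp add: mult_pos_neg)
  qed
  show "level_radius N ((N - 1) * pi / 4) K t * cos t * (tan (N * t - (N - 1) * pi / 4) - tan t) > 0"
    if "pi / 4 < t"
  proof -
    have "0 < (N - 1) * (t - pi / 4)" using assms(1) that by simp
    then have "tan t < tan (N * t - (N - 1) * pi / 4)"
      using bounds gap by (intro tan_monotone) auto
    then show ?thesis using pos by simp
  qed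
qed

lemma level_radius_cos_strict_antimono:
  assumes "N > 1" "K > 0"
  shows "strict_antimono_on {pi/4 - 3*pi/(4*N) <.. pi/4} (\<lambda>t. level_radius N ((N - 1) * pi / 4) K t * cos t)"
proof (rule monotone_onI)
  fix s t assume s: "s \<in> {pi/4 - 3*pi/(4*N) <.. pi/4}" and t: "t \<in> {pi/4 - 3*pi/(4*N) <.. pi/4}" and "s < t"
  have "0 < pi / (4 * N)" using assms(1) by simp
  then have window: "{s..t} \<subseteq> {pi/4 - 3*pi/(4*N) <..< pi/4 + pi/(4*N)}" using s t by auto
  show "level_radius N ((N - 1) * pi / 4) K t * cos t < level_radius N ((N - 1) * pi / 4) K s * cos s"
  proof (rule DERIV_neg_imp_decreasing_open[OF \<open>s < t\<close> _
        continuous_on_subset[OF continuous_on_level_radius_cos_window[OF assms(1)] window]])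
    fix x assume "s < x" "x < t"
    then have x: "x \<in> {pi/4 - 3*pi/(4*N) <..< pi/4 + pi/(4*N)}" "x < pi / 4"
      using subsetD[OF window, of x] t by auto
    show "\<exists>y. ((\<lambda>t. level_radius N ((N - 1) * pi / 4) K t * cos t) has_real_derivative y) (at x) \<and> y < 0"
      using has_real_derivative_level_radius_cos_window[OF assms(1) x(1)]
        level_radius_cos_deriv_sign(1)[OF assms x(1) x(2)] by blast
  qed
qed

lemma level_radius_cos_strict_mono:
  assumes "N > 1" "K > 0"
  shows "strict_mono_on {pi/4 ..< pi/4 + pi/(4*N)} (\<lambda>t. level_radius N ((N - 1) * pi / 4) K t * cos t)"
proof (rule monotone_onI)
  fix s t assume s: "s \<in> {pi/4 ..< pi/4 + pi/(4*N)}" and t: "t \<in> {pi/4 ..< pi/4 + pi/(4*N)}" and "s < t"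
  have "0 < 3 * pi / (4 * N)" using assms(1) by simp
  then have window: "{s..t} \<subseteq> {pi/4 - 3*pi/(4*N) <..< pi/4 + pi/(4*N)}" using s t by auto
  show "level_radius N ((N - 1) * pi / 4) K s * cos s < level_radius N ((N - 1) * pi / 4) K t * cos t"
  proof (rule DERIV_pos_imp_increasing_open[OF \<open>s < t\<close> _
        continuous_on_subset[OF continuous_on_level_radius_cos_window[OF assms(1)] window]])
    fix x assume "s < x" "x < t"
    then have x: "x \<in> {pi/4 - 3*pi/(4*N) <..< pi/4 + pi/(4*N)}" "pi / 4 < x"
      using subsetD[OF window, of x] s by auto
    show "\<exists>y. ((\<lambda>t. level_radius N ((N - 1) * pi / 4) K t * cos t) has_real_derivative y) (at x) \<and> y > 0"
      using has_real_derivative_level_radius_cos_window[OF assms(1) x(1)]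
        level_radius_cos_deriv_sign(2)[OF assms x(1) x(2)] by blast
  qed
qed

lemma level_radius_cos_pi_div_four:
  "level_radius N ((N - 1) * pi / 4) ((sqrt 2 / 2) powr (1 / N - 1)) (pi / 4) * cos (pi / 4) = 1"
proof -
  define s where "s = sqrt 2 / 2"
  have "s > 0" by (simp add: s_def)
  have phase: "N * (pi / 4) - (N - 1) * pi / 4 = pi / 4"
    by (simp add: field_simps)
  have "level_radius N ((N - 1) * pi / 4) (s powr (1 / N - 1)) (pi / 4) * cos (pi / 4)
      = s powr (1 / N - 1) * s powr (- 1 / N) * s"
    unfolding level_radius_def phase cos_45 s_def ..
  also have "\<dots> = s powr (1 / N - 1) * s powr (- 1 / N) * s powr 1"
    using \<open>s > 0\<close> by simp
  also have "\<dots> = s powr (1 / N - 1 + - 1 / N + 1)"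
    by (simp only: powr_add)
  also have "\<dots> = 1"
    using \<open>s > 0\<close> by simp
  finally show ?thesis by (simp add: s_def)
qed

lemma tan_phase_bounds:
  assumes "N \<ge> 3" "t \<in> {pi/4 - pi/(4*N) .. pi/4 + pi/(12*N)}"
  shows "0 \<le> tan (N * t - (N - 1) * pi / 4)" "tan (N * t - (N - 1) * pi / 4) \<le> 2 * tan t"
proof -
  define \<psi> where "\<psi> = N * t - (N - 1) * pi / 4"
  have t: "- (pi/(4*N)) \<le> t - pi / 4" "t - pi / 4 \<le> pi/(12*N)"
    using assms(2) by auto
  have "- (pi / 4) \<le> N * (t - pi / 4)"
    using mult_left_mono[OF t(1), of N] assms(1) by simp
  moreover have "N * (t - pi / 4) \<le> pi / 12"
    using mult_left_mono[OF t(2), of N] assms(1) by simp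
  moreover have "\<psi> = N * (t - pi / 4) + pi / 4"
    by (simp add: \<psi>_def field_simps)
  ultimately have \<psi>_range: "0 \<le> \<psi>" "\<psi> \<le> pi / 3"
    by linarith+
  have "pi / (4 * N) \<le> pi / 12" "pi / (12 * N) \<le> pi / 36"
    using assms(1) by (simp_all add: field_simps)
  then have t_range: "pi / 6 \<le> t" "t \<le> pi / 3"
    using assms(2) by auto
  have "tan 0 \<le> tan \<psi>"
    by (rule tan_mono_le) (use \<psi>_range pi_gt_zero in linarith)+
  then show "0 \<le> tan \<psi>" by simp
  have "tan 0 \<le> tan t"
    by (rule tan_mono_le) (use t_range pi_gt_zero in linarith)+
  then have "0 \<le> tan t" by simp
  show "tan \<psi> \<le> 2 * tan t"
  proof (cases "t \<le> pi / 4")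
    case True
    have "\<psi> - t = (N - 1) * (t - pi / 4)"
      by (simp add: \<psi>_def algebra_simps)
    also have "\<dots> \<le> 0"
      using assms(1) True by (simp add: mult_nonneg_nonpos)
    finally have "\<psi> \<le> t" by simp
    then have "tan \<psi> \<le> tan t"
      by (intro tan_mono_le) (use \<psi>_range t_range pi_gt_zero in linarith)+
    with \<open>0 \<le> tan t\<close> show ?thesis by simp
  next
    case False
    have "tan \<psi> \<le> tan (pi / 3)"
      by (rule tan_mono_le) (use \<psi>_range pi_gt_zero in linarith)+
    moreover have "tan (pi / 4) \<le> tan t"
      by (rule tan_mono_le) (use False t_range pi_gt_zero in linarith)+
    moreover have "sqrt 3 \<le> (2::real)"
      by (rule real_le_lsqrt) auto
    ultimately show ?thesis
      by (simp add: tan_60 tan_45)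
  qed
qed

lemma valley_level_crossing:
  fixes f :: "real \<Rightarrow> real"
  assumes "a < m" "m < b" "continuous_on {a..b} f"
    and dec: "strict_antimono_on {a..m} f" and inc: "strict_mono_on {m..b} f"
  obtains l u where "a \<le> l" "l \<le> m" "m < u" "u \<le> b" "f l = f u" "f m < f u"
    "\<And>t. t \<in> {l..u} \<Longrightarrow> f m \<le> f t \<and> f t \<le> f u"
proof -
  have dec': "f t \<le> f s" if "a \<le> s" "s \<le> t" "t \<le> m" for s t
    using monotone_onD[OF dec, of s t] that by (cases "s = t") auto
  have inc': "f s \<le> f t" if "m \<le> s" "s \<le> t" "t \<le> b" for s t
    using monotone_onD[OF inc, of s t] that by (cases "s = t") auto
  define c where "c = min (f a) (f b)"
  have "f m < f a" "f m < f b"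
    using monotone_onD[OF dec, of a m] monotone_onD[OF inc, of m b] assms(1,2) by auto
  then have "f m < c" by (simp add: c_def)
  obtain l where l: "a \<le> l" "l \<le> m" "f l = c"
    using IVT2'[of f m c a] \<open>f m < c\<close> assms(1,2) continuous_on_subset[OF assms(3)]
    by (force simp: c_def)
  obtain u where u: "m \<le> u" "u \<le> b" "f u = c"
    using IVT'[of f m c b] \<open>f m < c\<close> assms(1,2) continuous_on_subset[OF assms(3)]
    by (force simp: c_def)
  have "m \<noteq> u" using \<open>f m < c\<close> u(3) by auto
  show thesis
  proof
    fix t assume "t \<in> {l..u}"
    then show "f m \<le> f t \<and> f t \<le> f u"
      using dec'[of l t] dec'[of t m] inc'[of m t] inc'[of t u] l u by (cases "t \<le> m") auto
  qed (use l u \<open>m \<noteq> u\<close> \<open>f m < c\<close> in auto)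
qed

lemma level_radius_properties:
  fixes n :: nat and K t :: real
  assumes "n \<ge> 3" "K > 0" "t \<in> {pi/4 - pi/(4 * real n) .. pi/4 + pi/(12 * real n)}"
  defines "\<phi> \<equiv> (real n - 1) * pi / 4"
  shows "level_radius n \<phi> K t > 0"
    and "(level_radius n \<phi> K has_real_derivative level_radius' n \<phi> K t) (at t)"
    and "(level_radius' n \<phi> K has_real_derivative level_radius'' n \<phi> K t) (at t)"
    and "Im (cis (- (\<phi> - pi / 2)) * (complex_of_real (level_radius n \<phi> K t) * cis t) ^ n) = K ^ n"
    and "(2 * (level_radius' n \<phi> K t)\<^sup>2 - level_radius n \<phi> K t * level_radius'' n \<phi> K t
            + (level_radius n \<phi> K t)\<^sup>2) / ((level_radius' n \<phi> K t)\<^sup>2 + (level_radius n \<phi> K t)\<^sup>2)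
          + (real n - 1) = 0"
    and "level_radius' n \<phi> K t \<ge> 0"
    and "level_radius' n \<phi> K t / level_radius n \<phi> K t \<le> 2 * tan t"
proof -
  have N: "real n > 1" "real n \<ge> 3" "real n \<noteq> 0" "n > 0" using assms(1) by auto
  have "pi / (4 * real n) < 3 * pi / (4 * real n)" "pi / (12 * real n) < pi / (4 * real n)"
    using N by (simp_all add: field_simps)
  then have "t \<in> {pi/4 - 3*pi/(4 * real n) <..< pi/4 + pi/(4 * real n)}"
    using assms(3) by auto
  note cos_pos = cos_pos_window[OF N(1) this, folded \<phi>_def]
  show r_pos: "level_radius n \<phi> K t > 0"
    using assms(2) cos_pos(1) by (rule level_radius_pos)
  show "(level_radius n \<phi> K has_real_derivative level_radius' n \<phi> K t) (at t)"
    using cos_pos N by (intro has_real_derivative_level_radius)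
  show "(level_radius' n \<phi> K has_real_derivative level_radius'' n \<phi> K t) (at t)"
    using cos_pos N by (intro has_real_derivative_level_radius')
  show "Im (cis (- (\<phi> - pi / 2)) * (complex_of_real (level_radius n \<phi> K t) * cis t) ^ n) = K ^ n"
    using cos_pos N by (intro Im_level_radius_power)
  show "(2 * (level_radius' n \<phi> K t)\<^sup>2 - level_radius n \<phi> K t * level_radius'' n \<phi> K t
            + (level_radius n \<phi> K t)\<^sup>2) / ((level_radius' n \<phi> K t)\<^sup>2 + (level_radius n \<phi> K t)\<^sup>2)
          + (real n - 1) = 0"
    using level_radius_stationary[of K n t \<phi>] cos_pos assms(2) by simp
  note tan_bounds = tan_phase_bounds[OF N(2) assms(3), folded \<phi>_def]
  show "level_radius' n \<phi> K t \<ge> 0"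
    using r_pos tan_bounds(1) by (simp add: level_radius'_def)
  show "level_radius' n \<phi> K t / level_radius n \<phi> K t \<le> 2 * tan t"
    using r_pos tan_bounds(2) by (simp add: level_radius'_def)
qed

lemma level_radius_cos_valley:
  fixes N K :: real
  assumes "N > 1" "K > 0"
  defines "x \<equiv> \<lambda>t. level_radius N ((N - 1) * pi / 4) K t * cos t"
  obtains l u where "pi/4 - pi/(4*N) \<le> l" "l \<le> pi/4" "pi/4 < u" "u \<le> pi/4 + pi/(12*N)"
    "x l = x u" "x (pi/4) < x u" "\<And>t. t \<in> {l..u} \<Longrightarrow> x (pi/4) \<le> x t \<and> x t \<le> x u"
proof -
  have "0 < pi / (12 * N)" "pi / (12 * N) < pi / (4 * N)" "pi / (4 * N) < 3 * pi / (4 * N)"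
    using assms(1) by (simp_all add: field_simps)
  then have sub: "{pi/4 - pi/(4*N) .. pi/4 + pi/(12*N)} \<subseteq> {pi/4 - 3*pi/(4*N) <..< pi/4 + pi/(4*N)}"
      "{pi/4 - pi/(4*N) .. pi/4} \<subseteq> {pi/4 - 3*pi/(4*N) <.. pi/4}"
      "{pi/4 .. pi/4 + pi/(12*N)} \<subseteq> {pi/4 ..< pi/4 + pi/(4*N)}"
      and ends: "pi/4 - pi/(4*N) < pi/4" "pi/4 < pi/4 + pi/(12*N)"
    by auto
  have "continuous_on {pi/4 - pi/(4*N) .. pi/4 + pi/(12*N)} x"
    unfolding x_def by (rule continuous_on_subset[OF continuous_on_level_radius_cos_window[OF assms(1)] sub(1)])
  moreover have "strict_antimono_on {pi/4 - pi/(4*N) .. pi/4} x"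
    unfolding x_def by (rule monotone_on_subset[OF level_radius_cos_strict_antimono[OF assms(1,2)] sub(2)])
  moreover have "strict_mono_on {pi/4 .. pi/4 + pi/(12*N)} x"
    unfolding x_def by (rule monotone_on_subset[OF level_radius_cos_strict_mono[OF assms(1,2)] sub(3)])
  ultimately show thesis
    using valley_level_crossing[OF ends] that by blast
qed

theorem lemma5p2:
  fixes n :: nat
  assumes "n \<ge> 3"
  shows "\<exists>(a::real) (p::real) (q::real) (th_hat::real) (th_min::real) (th0::real) (th_max::real)
           (r::real \<Rightarrow> real) (r1::real \<Rightarrow> real) (r2::real \<Rightarrow> real) (c::real).
    a > 1 \<and> th_min \<le> th0 \<and> th0 < th_max \<and>
    (\<forall>t\<in>{th_min..th_max}.
        r t > 0 \<and>
        (r has_real_derivative r1 t) (at t within {th_min..th_max}) \<and>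
        (r1 has_real_derivative r2 t) (at t within {th_min..th_max}) \<and>
        Im (cis (- th_hat) * (complex_of_real (r t) * cis t) ^ n) = c \<and>
        (2 * (r1 t)\<^sup>2 - r t * r2 t + (r t)\<^sup>2) / ((r1 t)\<^sup>2 + (r t)\<^sup>2) + (real n - 1) = 0 \<and>
        1 \<le> r t * cos t \<and> r t * cos t \<le> a \<and>
        r1 t \<ge> 0 \<and> r1 t / r t \<le> 2 * tan t) \<and>
    r th0 * cos th0 = 1 \<and> r th0 * sin th0 = q \<and>
    r1 th0 * cos th0 - r th0 * sin th0 = 0 \<and>
    (r1 th0 * cos th0 - r th0 * sin th0, r1 th0 * sin th0 + r th0 * cos th0) \<noteq> (0, 0) \<and>
    r th_max * cos th_max = a \<and> r th_max * sin th_max = p \<and>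
    r th_min * cos th_min = a"
proof -
  define \<phi> K where "\<phi> = (real n - 1) * pi / 4" and "K = (sqrt 2 / 2) powr (1 / real n - 1)"
  define r where "r = level_radius n \<phi> K"
  have n: "real n > 1" using assms by simp
  have K: "K > 0" by (simp add: K_def)
  obtain l u where lu: "pi/4 - pi/(4 * real n) \<le> l" "l \<le> pi/4" "pi/4 < u" "u \<le> pi/4 + pi/(12 * real n)"
    and "r l * cos l = r u * cos u" "r (pi/4) * cos (pi/4) < r u * cos u"
    and bounds: "\<And>t. t \<in> {l..u} \<Longrightarrow> r (pi/4) * cos (pi/4) \<le> r t * cos t \<and> r t * cos t \<le> r u * cos u"
    using level_radius_cos_valley[OF n K] unfolding r_def \<phi>_def by blast
  have "r (pi/4) * cos (pi/4) = 1"
    using level_radius_cos_pi_div_four by (simp add: r_def \<phi>_def K_def)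
  have "real n * (pi / 4) - \<phi> = pi / 4"
    by (simp add: \<phi>_def field_simps)
  then have "level_radius' n \<phi> K (pi/4) = r (pi/4)"
    unfolding level_radius'_def r_def by (simp only: tan_45 mult_1_right)
  note curve = level_radius_properties[OF assms K, folded \<phi>_def r_def]
  have "t \<in> {pi/4 - pi/(4 * real n) .. pi/4 + pi/(12 * real n)}" if "t \<in> {l..u}" for t
    using that lu by auto
  note on_arc = curve[OF this]
  show ?thesis
    apply (rule exI[of _ "r u * cos u"], rule exI[of _ "r u * sin u"], rule exI[of _ "r (pi/4) * sin (pi/4)"],
        rule exI[of _ "\<phi> - pi/2"], rule exI[of _ l], rule exI[of _ "pi/4"], rule exI[of _ u], rule exI[of _ r],
        rule exI[of _ "level_radius' n \<phi> K"], rule exI[of _ "level_radius'' n \<phi> K"], rule exI[of _ "K ^ n"])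
    using lu bounds on_arc \<open>r (pi/4) * cos (pi/4) = 1\<close> \<open>level_radius' n \<phi> K (pi/4) = r (pi/4)\<close>
      \<open>r l * cos l = r u * cos u\<close> \<open>r (pi/4) * cos (pi/4) < r u * cos u\<close>
    by (auto intro: has_field_derivative_at_within simp: sin_45 cos_45)
qed

end
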